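(* Let $(a(i))_{i\in\mathbb N}$ be a stationary process taking values in a finite set $S=\{s_1,\dots,s_N\}\subset\mathbb R$, $N\ge2$, with $\mathbb E[a(1)]=0$, satisfying: there are $C>0$, $\alpha\in[0,1)$ such that for all $k\in\mathbb N$, $2\le l\le k$ and $i_1\le\dots\le i_k$, $$\max_{j_1,\dots,j_k}\Big|\mathbb P\big(a(i_k)=s_{j_k},\dots,a(i_l)=s_{j_l}\,\big|\,a(i_{l-1})=s_{j_{l-1}},\dots,a(i_1)=s_{j_1}\big)-\mathbb P\big(a(i_k)=s_{j_k},\dots,a(i_l)=s_{j_l}\big)\Big|\le C\alpha^{i_l-i_{l-1}}.$$ Assume in addition that $\mathbb E[a(i_1)\cdots a(i_r)]=0$ for every odd $r\in\mathbb N$ and all $(i_1,\dots,i_r)\in\mathbb N^r$. Then for every $k\in\mathbb N$ there is a constant $C_k$ such that for all $i_1\le\dots\le i_{2k}$, $$\big|\mathbb E[a(i_1)\cdots a(i_{2k})]\big|\le C_k\,\alpha^{\max\{i_{2l}-i_{2l-1}:\,l=1,\dots,k\}}\le C_k\prod_{l=1}^k\big(\alpha^{1/k}\big)^{i_{2l}-i_{2l-1}}.$$ *)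

theory Defs
  imports "HOL-Probability.Probability"
begin

text \<open>Index set is {1,2,...}. A discrete (finite-valued) process is stationary iff all
finite-dimensional cylinder probabilities are shift invariant.\<close>
definition stationary_proc :: "'a measure \<Rightarrow> (nat \<Rightarrow> 'a \<Rightarrow> real) \<Rightarrow> bool" where
  "stationary_proc M a \<longleftrightarrow>
     (\<forall>(is :: nat list) (vs :: real list) (h :: nat).
        length is = length vs \<longrightarrow> (\<forall>i\<in>set is. 1 \<le> i) \<longrightarrow>
        measure M {\<omega>\<in>space M. \<forall>t<length is. a (is ! t) \<omega> = vs ! t}
      = measure M {\<omega>\<in>space M. \<forall>t<length is. a (is ! t + h) \<omega> = vs ! t})"

text \<open>Conditional probability P(A | B) = P(A \<inter> B) / P(B), used only when P(B) > 0.\<close>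
definition condP :: "'a measure \<Rightarrow> 'a set \<Rightarrow> 'a set \<Rightarrow> real" where
  "condP M A B = measure M (A \<inter> B) / measure M B"

definition mixing_cond :: "'a measure \<Rightarrow> (nat \<Rightarrow> 'a \<Rightarrow> real) \<Rightarrow> real set \<Rightarrow> real \<Rightarrow> real \<Rightarrow> bool" where
  "mixing_cond M a S C \<alpha> \<longleftrightarrow>
     (\<forall>(k::nat) (l::nat) (i :: nat \<Rightarrow> nat) (v :: nat \<Rightarrow> real).
        2 \<le> l \<longrightarrow> l \<le> k \<longrightarrow> 1 \<le> i 1 \<longrightarrow> (\<forall>t. 1 \<le> t \<longrightarrow> t < k \<longrightarrow> i t \<le> i (t + 1)) \<longrightarrow>
        (\<forall>t\<in>{1..k}. v t \<in> S) \<longrightarrow>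
        (let A = {\<omega>\<in>space M. \<forall>t\<in>{l..k}. a (i t) \<omega> = v t};
             B = {\<omega>\<in>space M. \<forall>t\<in>{1..l-1}. a (i t) \<omega> = v t}
         in measure M B > 0 \<longrightarrow>
            \<bar>condP M A B - measure M A\<bar> \<le> C * \<alpha> ^ (i l - i (l - 1))))"

end

theory Submission
  imports Defs
begin

(* Fix an even number 2k of indices i_1 \<le> ... \<le> i_2k and let the gap
   i_2l - i_(2l-1) be maximal.  Split the product at position p = 2l into the block
   X = a(i_1)...a(i_(p-1)), which has an odd number of factors and hence mean zero, and
   Y = a(i_p)...a(i_2k).  Since the process is finite-valued, both blocks are finite
   linear combinations of indicators of cylinder events, so
     E[XY] = E[XY] - E[X]E[Y] = \<Sum>_(u,w) (\<Pi>u)(\<Pi>w) (P(A_u \<inter> B_w) - P(A_u) P(B_w)),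
   and the mixing condition bounds every covariance by C \<alpha>^(gap).  Summing the absolute
   weights gives the constant C (\<Sum>_(s\<in>S) |s|)^(2k).  The second inequality is the
   elementary fact that \<alpha>^(max g) is at most the geometric mean of the \<alpha>^(g l). *)

definition cylinder :: "'a measure \<Rightarrow> ('b \<Rightarrow> 'a \<Rightarrow> real) \<Rightarrow> 'b set \<Rightarrow> ('b \<Rightarrow> real) \<Rightarrow> 'a set" where
  "cylinder M X T u = {\<omega>\<in>space M. \<forall>t\<in>T. X t \<omega> = u t}"

lemma cylinder_sets:
  assumes "finite T" and "\<And>t. t \<in> T \<Longrightarrow> X t \<in> borel_measurable M"
  shows "cylinder M X T u \<in> sets M"
  unfolding cylinder_def
proof (intro sets.sets_Collect_finite_All \<open>finite T\<close>)
  fix t assume "t \<in> T"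
  have "{\<omega>\<in>space M. X t \<omega> = u t} = X t -` {u t} \<inter> space M" by auto
  also have "\<dots> \<in> sets M" using assms(2)[OF \<open>t \<in> T\<close>] by (rule measurable_sets) simp
  finally show "{\<omega>\<in>space M. X t \<omega> = u t} \<in> sets M" .
qed

lemma prod_eq_sum_cylinder_indicators:
  assumes "finite S" "finite T" "\<omega> \<in> space M" and vals: "\<And>t. t \<in> T \<Longrightarrow> X t \<omega> \<in> S"
  shows "(\<Prod>t\<in>T. X t \<omega>) =
           (\<Sum>u\<in>PiE T (\<lambda>_. S). (\<Prod>t\<in>T. u t) * indicator (cylinder M X T u) \<omega>)"
proof -
  have "(\<Prod>t\<in>T. X t \<omega>) = (\<Prod>t\<in>T. \<Sum>s\<in>S. s * (if X t \<omega> = s then 1 else 0))"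
    using vals \<open>finite S\<close> by (intro prod.cong refl) (simp add: if_distrib sum.delta cong: if_cong)
  also have "\<dots> = (\<Sum>u\<in>PiE T (\<lambda>_. S). \<Prod>t\<in>T. u t * (if X t \<omega> = u t then 1 else 0))"
    using assms(1,2) by (simp add: prod_sum_PiE)
  also have "\<dots> = (\<Sum>u\<in>PiE T (\<lambda>_. S). (\<Prod>t\<in>T. u t) * indicator (cylinder M X T u) \<omega>)"
    using assms(2,3) by (intro sum.cong refl)
      (auto simp: prod.distrib cylinder_def indicator_def prod_zero_iff)
  finally show ?thesis .
qed

lemma sum_abs_prod_PiE:
  assumes "finite (S::real set)" "finite T"
  shows "(\<Sum>u\<in>PiE T (\<lambda>_. S). \<bar>\<Prod>t\<in>T. u t\<bar>) = (\<Sum>s\<in>S. \<bar>s\<bar>) ^ card T"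
  using prod_sum_PiE[of T "\<lambda>_. S" "\<lambda>_ s. \<bar>s\<bar>"] assms by (simp add: abs_prod)

lemma (in finite_measure) integral_sum_indicators:
  assumes "finite I" and "\<And>j. j \<in> I \<Longrightarrow> A j \<in> sets M"
  shows "integral\<^sup>L M (\<lambda>\<omega>. \<Sum>j\<in>I. c j * indicator (A j) \<omega>) = (\<Sum>j\<in>I. c j * measure M (A j))"
proof -
  have "integral\<^sup>L M (\<lambda>\<omega>. \<Sum>j\<in>I. c j * indicator (A j) \<omega>) =
          (\<Sum>j\<in>I. integral\<^sup>L M (\<lambda>\<omega>. c j * indicator (A j) \<omega>))"
    using assms by (intro Bochner_Integration.integral_sum integrable_mult_right
        integrable_real_indicator) (auto simp: less_top[symmetric])
  also have "\<dots> = (\<Sum>j\<in>I. c j * measure M (A j))"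
    using assms by (intro sum.cong refl) (simp add: sets.Int_space_eq2)
  finally show ?thesis .
qed

context prob_space
begin

lemma expectation_prod_cylinders:
  assumes "finite S" "finite T"
    and meas: "\<And>t. t \<in> T \<Longrightarrow> X t \<in> borel_measurable M"
    and vals: "\<And>t \<omega>. t \<in> T \<Longrightarrow> \<omega> \<in> space M \<Longrightarrow> X t \<omega> \<in> S"
  shows "expectation (\<lambda>\<omega>. \<Prod>t\<in>T. X t \<omega>) =
           (\<Sum>u\<in>PiE T (\<lambda>_. S). (\<Prod>t\<in>T. u t) * prob (cylinder M X T u))"
proof -
  have "expectation (\<lambda>\<omega>. \<Prod>t\<in>T. X t \<omega>) =
          expectation (\<lambda>\<omega>. \<Sum>u\<in>PiE T (\<lambda>_. S). (\<Prod>t\<in>T. u t) * indicator (cylinder M X T u) \<omega>)"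
    using assms
    by (intro Bochner_Integration.integral_cong refl prod_eq_sum_cylinder_indicators) auto
  also have "\<dots> = (\<Sum>u\<in>PiE T (\<lambda>_. S). (\<Prod>t\<in>T. u t) * prob (cylinder M X T u))"
    using assms by (intro integral_sum_indicators cylinder_sets finite_PiE)
  finally show ?thesis .
qed

lemma expectation_prod_two_blocks:
  assumes "finite S" "finite T1" "finite T2" "T1 \<inter> T2 = {}"
    and meas: "\<And>t. t \<in> T1 \<union> T2 \<Longrightarrow> X t \<in> borel_measurable M"
    and vals: "\<And>t \<omega>. t \<in> T1 \<union> T2 \<Longrightarrow> \<omega> \<in> space M \<Longrightarrow> X t \<omega> \<in> S"
  shows "expectation (\<lambda>\<omega>. \<Prod>t\<in>T1 \<union> T2. X t \<omega>) =
           (\<Sum>u\<in>PiE T1 (\<lambda>_. S). \<Sum>w\<in>PiE T2 (\<lambda>_. S). ((\<Prod>t\<in>T1. u t) * (\<Prod>t\<in>T2. w t)) *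
              prob (cylinder M X T1 u \<inter> cylinder M X T2 w))"
    (is "_ = (\<Sum>u\<in>?U. \<Sum>w\<in>?W. ?c u w * prob (?A u w))")
proof -
  have fin: "finite ?U" "finite ?W" using assms(1-3) by (auto intro: finite_PiE)
  have events: "?A u w \<in> sets M" for u w
    using assms by (intro sets.Int cylinder_sets) auto
  have pointwise: "(\<Prod>t\<in>T1 \<union> T2. X t \<omega>) = (\<Sum>(u, w)\<in>?U \<times> ?W. ?c u w * indicator (?A u w) \<omega>)"
    if "\<omega> \<in> space M" for \<omega>
  proof -
    have "(\<Prod>t\<in>T1 \<union> T2. X t \<omega>) = (\<Prod>t\<in>T1. X t \<omega>) * (\<Prod>t\<in>T2. X t \<omega>)"
      using assms(2-4) by (simp add: prod.union_disjoint)
    also have "\<dots> = (\<Sum>u\<in>?U. (\<Prod>t\<in>T1. u t) * indicator (cylinder M X T1 u) \<omega>) *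
                    (\<Sum>w\<in>?W. (\<Prod>t\<in>T2. w t) * indicator (cylinder M X T2 w) \<omega>)"
      using assms that by (simp add: prod_eq_sum_cylinder_indicators)
    also have "\<dots> = (\<Sum>(u, w)\<in>?U \<times> ?W. ?c u w * indicator (?A u w) \<omega>)"
      by (simp add: sum_product sum.cartesian_product indicator_inter_arith mult_ac)
    finally show ?thesis .
  qed
  have "expectation (\<lambda>\<omega>. \<Prod>t\<in>T1 \<union> T2. X t \<omega>) =
          expectation (\<lambda>\<omega>. \<Sum>(u, w)\<in>?U \<times> ?W. ?c u w * indicator (?A u w) \<omega>)"
    using pointwise by (intro Bochner_Integration.integral_cong) auto
  also have "\<dots> = (\<Sum>(u, w)\<in>?U \<times> ?W. ?c u w * prob (?A u w))"
    using integral_sum_indicators[of "?U \<times> ?W" "case_prod ?A" "case_prod ?c"] fin events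
    by (simp add: case_prod_beta')
  finally show ?thesis by (simp add: sum.cartesian_product)
qed

lemma expectation_prod_decoupling:
  assumes "finite S" "finite T1" "finite T2" "T1 \<inter> T2 = {}"
    and meas: "\<And>t. t \<in> T1 \<union> T2 \<Longrightarrow> X t \<in> borel_measurable M"
    and vals: "\<And>t \<omega>. t \<in> T1 \<union> T2 \<Longrightarrow> \<omega> \<in> space M \<Longrightarrow> X t \<omega> \<in> S"
    and centered: "expectation (\<lambda>\<omega>. \<Prod>t\<in>T1. X t \<omega>) = 0"
    and cov: "\<And>u w. u \<in> PiE T1 (\<lambda>_. S) \<Longrightarrow> w \<in> PiE T2 (\<lambda>_. S) \<Longrightarrow>
                \<bar>prob (cylinder M X T1 u \<inter> cylinder M X T2 w)
                   - prob (cylinder M X T1 u) * prob (cylinder M X T2 w)\<bar> \<le> e"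
  shows "\<bar>expectation (\<lambda>\<omega>. \<Prod>t\<in>T1 \<union> T2. X t \<omega>)\<bar> \<le> e * (\<Sum>s\<in>S. \<bar>s\<bar>) ^ (card T1 + card T2)"
proof -
  let ?U = "PiE T1 (\<lambda>_. S)" and ?W = "PiE T2 (\<lambda>_. S)"
  let ?pu = "\<lambda>u. \<Prod>t\<in>T1. u t" and ?pw = "\<lambda>w. \<Prod>t\<in>T2. w t"
  let ?d = "\<lambda>u w. prob (cylinder M X T1 u \<inter> cylinder M X T2 w)
                 - prob (cylinder M X T1 u) * prob (cylinder M X T2 w)"
  have first_block: "(\<Sum>u\<in>?U. ?pu u * prob (cylinder M X T1 u)) = 0"
    using centered expectation_prod_cylinders[of S T1 X] assms(1,2) meas vals by simp
  have "expectation (\<lambda>\<omega>. \<Prod>t\<in>T1 \<union> T2. X t \<omega>) =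
          (\<Sum>u\<in>?U. \<Sum>w\<in>?W. (?pu u * ?pw w) * prob (cylinder M X T1 u \<inter> cylinder M X T2 w))
          - (\<Sum>u\<in>?U. ?pu u * prob (cylinder M X T1 u)) * (\<Sum>w\<in>?W. ?pw w * prob (cylinder M X T2 w))"
    using expectation_prod_two_blocks[OF assms(1-6)] first_block by simp
  also have "\<dots> = (\<Sum>u\<in>?U. \<Sum>w\<in>?W. (?pu u * ?pw w) * ?d u w)"
    by (simp add: sum_product sum_subtractf[symmetric] right_diff_distrib mult_ac)
  finally have eq: "expectation (\<lambda>\<omega>. \<Prod>t\<in>T1 \<union> T2. X t \<omega>) = \<dots>" .
  have "\<bar>\<Sum>u\<in>?U. \<Sum>w\<in>?W. (?pu u * ?pw w) * ?d u w\<bar> \<le> (\<Sum>u\<in>?U. \<Sum>w\<in>?W. \<bar>?pu u * ?pw w\<bar> * e)"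
  proof -
    have "\<bar>\<Sum>u\<in>?U. \<Sum>w\<in>?W. (?pu u * ?pw w) * ?d u w\<bar> \<le> (\<Sum>u\<in>?U. \<Sum>w\<in>?W. \<bar>(?pu u * ?pw w) * ?d u w\<bar>)"
      by (rule order_trans[OF sum_abs sum_mono[OF sum_abs]])
    also have "\<dots> \<le> (\<Sum>u\<in>?U. \<Sum>w\<in>?W. \<bar>?pu u * ?pw w\<bar> * e)"
      unfolding abs_mult[of "?pu _ * ?pw _"] by (intro sum_mono mult_left_mono cov) auto
    finally show ?thesis .
  qed
  also have "\<dots> = (\<Sum>u\<in>?U. \<bar>?pu u\<bar>) * (\<Sum>w\<in>?W. \<bar>?pw w\<bar>) * e"
    by (subst sum_product, simp add: sum_distrib_right abs_mult)
  also have "\<dots> = e * (\<Sum>s\<in>S. \<bar>s\<bar>) ^ (card T1 + card T2)"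
    using assms(1-3) by (simp add: sum_abs_prod_PiE power_add)
  finally show ?thesis using eq by simp
qed

lemma covariance_le_if_condP_close:
  assumes "A \<in> events" "B \<in> events" "0 \<le> e"
    and "prob B > 0 \<Longrightarrow> \<bar>condP M A B - prob A\<bar> \<le> e"
  shows "\<bar>prob (B \<inter> A) - prob B * prob A\<bar> \<le> e"
proof (cases "prob B = 0")
  case True
  then have "prob (B \<inter> A) = 0"
    using finite_measure_mono[of "B \<inter> A" B] assms(2) by (simp add: measure_le_0_iff)
  then show ?thesis using True assms(3) by simp
next
  case False
  then have pos: "prob B > 0" by (simp add: zero_less_measure_iff)
  have "prob (B \<inter> A) - prob B * prob A = prob B * (condP M A B - prob A)"
    using pos by (simp add: condP_def field_simps Int_commute)
  then have "\<bar>prob (B \<inter> A) - prob B * prob A\<bar> = prob B * \<bar>condP M A B - prob A\<bar>"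
    by (simp add: abs_mult)
  also have "\<dots> \<le> 1 * e" using assms(4)[OF pos] by (intro mult_mono) auto
  finally show ?thesis by simp
qed

end

lemma mixing_cylinder_covariance:
  fixes a :: "nat \<Rightarrow> 'a \<Rightarrow> real" and i :: "nat \<Rightarrow> nat" and p n :: nat
  assumes "prob_space M" "mixing_cond M a S C \<alpha>" "0 \<le> C" "0 \<le> \<alpha>"
    and "2 \<le> p" "p \<le> n" "1 \<le> i 1" "\<forall>t. 1 \<le> t \<longrightarrow> t < n \<longrightarrow> i t \<le> i (t + 1)"
    and meas: "\<And>t. t \<in> {1..n} \<Longrightarrow> a (i t) \<in> borel_measurable M"
    and u: "u \<in> PiE {1..p-1} (\<lambda>_. S)" and w: "w \<in> PiE {p..n} (\<lambda>_. S)"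
  shows "\<bar>measure M (cylinder M (\<lambda>t. a (i t)) {1..p-1} u \<inter> cylinder M (\<lambda>t. a (i t)) {p..n} w)
           - measure M (cylinder M (\<lambda>t. a (i t)) {1..p-1} u)
             * measure M (cylinder M (\<lambda>t. a (i t)) {p..n} w)\<bar>
         \<le> C * \<alpha> ^ (i p - i (p - 1))"
proof -
  interpret prob_space M by fact
  define v where "v t = (if t < p then u t else w t)" for t
  have v_in_S: "\<forall>t\<in>{1..n}. v t \<in> S"
  proof
    fix t assume "t \<in> {1..n}"
    then show "v t \<in> S" using PiE_mem[OF u, of t] PiE_mem[OF w, of t]
      by (cases "t < p") (auto simp: v_def)
  qed
  have target: "{\<omega>\<in>space M. \<forall>t\<in>{p..n}. a (i t) \<omega> = v t} = cylinder M (\<lambda>t. a (i t)) {p..n} w"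
    by (auto simp: cylinder_def v_def)
  have condition: "{\<omega>\<in>space M. \<forall>t\<in>{1..p-1}. a (i t) \<omega> = v t} = cylinder M (\<lambda>t. a (i t)) {1..p-1} u"
    using assms(5) by (auto simp: cylinder_def v_def)
  have "let A = {\<omega>\<in>space M. \<forall>t\<in>{p..n}. a (i t) \<omega> = v t};
            B = {\<omega>\<in>space M. \<forall>t\<in>{1..p-1}. a (i t) \<omega> = v t}
        in prob B > 0 \<longrightarrow> \<bar>condP M A B - prob A\<bar> \<le> C * \<alpha> ^ (i p - i (p - 1))"
    using assms(2) assms(5-8) v_in_S unfolding mixing_cond_def by blast
  then show ?thesis
    using assms(3-6) meas unfolding target condition Let_def
    by (intro covariance_le_if_condP_close cylinder_sets) auto
qed

lemma monotone_index_ge_first: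
  fixes i :: "nat \<Rightarrow> 'a::preorder" and n t :: nat
  assumes "\<forall>t. 1 \<le> t \<longrightarrow> t < n \<longrightarrow> i t \<le> i (t + 1)" "1 \<le> t" "t \<le> n"
  shows "i 1 \<le> i t"
  using assms(2,3)
proof (induction t)
  case (Suc m)
  show ?case
  proof (cases "m = 0")
    case False
    then have "i 1 \<le> i m" "i m \<le> i (Suc m)" using Suc assms(1) by auto
    then show ?thesis using order_trans by blast
  qed simp
qed simp

text \<open>For \<open>0 \<le> \<alpha> \<le> 1\<close>, \<open>\<alpha>\<close> to the largest exponent is at most the product of the
  \<open>card I\<close>-th roots: the maximum dominates the average of the exponents.\<close>
lemma power_Max_le_prod_root_powers:
  fixes \<alpha> :: real and g :: "'b \<Rightarrow> nat"
  assumes "0 \<le> \<alpha>" "\<alpha> \<le> 1" "finite I" "I \<noteq> {}"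
  shows "\<alpha> ^ Max (g ` I) \<le> (\<Prod>l\<in>I. (\<alpha> powr (1 / real (card I))) ^ g l)"
proof -
  define G where "G = Max (g ` I)"
  have g_le: "g l \<le> G" if "l \<in> I" for l using assms(3) that by (simp add: G_def)
  show ?thesis
  proof (cases "\<alpha> = 0")
    case True
    show ?thesis
    proof (cases "G = 0")
      case True
      then show ?thesis using g_le \<open>\<alpha> = 0\<close> by (simp add: G_def le_zero_eq)
    next
      case False
      have "0 \<le> (\<Prod>l\<in>I. (\<alpha> powr (1 / real (card I))) ^ g l)" by (simp add: prod_nonneg)
      then show ?thesis using False \<open>\<alpha> = 0\<close> by (simp add: G_def power_0_left)
    qed
  next
    case False
    then have pos: "\<alpha> > 0" using assms(1) by simp
    have mean_le: "(\<Sum>l\<in>I. real (g l) * (1 / real (card I))) \<le> real G"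
    proof -
      have "(\<Sum>l\<in>I. real (g l)) \<le> real (card I) * real G"
        using sum_mono[of I "\<lambda>l. real (g l)" "\<lambda>_. real G"] g_le by simp
      moreover have "card I > 0" using assms(3,4) by (simp add: card_gt_0_iff)
      ultimately show ?thesis
        by (simp add: sum_divide_distrib[symmetric] divide_le_eq mult.commute)
    qed
    have "\<alpha> ^ G = \<alpha> powr real G" using pos by (simp add: powr_realpow)
    also have "\<dots> \<le> \<alpha> powr (\<Sum>l\<in>I. real (g l) * (1 / real (card I)))"
      using mean_le assms(1,2) by (rule powr_mono')
    also have "\<dots> = (\<Prod>l\<in>I. (\<alpha> powr (1 / real (card I))) ^ g l)"
      using pos by (simp add: powr_sum powr_power mult.commute)
    finally show ?thesis by (simp add: G_def)
  qed
qed

text \<open>The main estimate for a fixed even order \<open>2k\<close> and fixed indices: split the product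
  at the position \<open>2l\<close> of the largest gap; the first block has \<open>2l - 1\<close> factors, so it has
  mean zero, and the mixing condition bounds the covariances across the split.\<close>
lemma even_moment_bound:
  fixes a :: "nat \<Rightarrow> 'a \<Rightarrow> real" and i :: "nat \<Rightarrow> nat"
  assumes "prob_space M"
    and meas: "\<And>n. 1 \<le> n \<Longrightarrow> a n \<in> borel_measurable M"
    and "finite S"
    and vals: "\<And>n \<omega>. 1 \<le> n \<Longrightarrow> \<omega> \<in> space M \<Longrightarrow> a n \<omega> \<in> S"
    and "0 \<le> C" "0 \<le> \<alpha>" "\<alpha> \<le> 1"
    and "mixing_cond M a S C \<alpha>"
    and odd_moments: "\<And>(r::nat) (i::nat \<Rightarrow> nat). odd r \<Longrightarrow> (\<forall>t\<in>{1..r}. 1 \<le> i t) \<Longrightarrow>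
           integral\<^sup>L M (\<lambda>\<omega>. \<Prod>t\<in>{1..r}. a (i t) \<omega>) = 0"
    and "1 \<le> k" "1 \<le> i 1" and mono: "\<forall>t. 1 \<le> t \<longrightarrow> t < 2 * k \<longrightarrow> i t \<le> i (t + 1)"
  defines "g \<equiv> \<lambda>l. i (2*l) - i (2*l - 1)" and "K \<equiv> \<Sum>s\<in>S. \<bar>s\<bar>"
  shows "\<bar>integral\<^sup>L M (\<lambda>\<omega>. \<Prod>t\<in>{1..2*k}. a (i t) \<omega>)\<bar> \<le> C * K ^ (2*k) * \<alpha> ^ Max (g ` {1..k})"
    and "C * K ^ (2*k) * \<alpha> ^ Max (g ` {1..k})
           \<le> C * K ^ (2*k) * (\<Prod>l\<in>{1..k}. (\<alpha> powr (1 / real k)) ^ g l)"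
proof -
  interpret prob_space M by fact
  have "Max (g ` {1..k}) \<in> g ` {1..k}" using \<open>1 \<le> k\<close> by (intro Max_in) auto
  then obtain l where l: "l \<in> {1..k}" "g l = Max (g ` {1..k})" by auto
  have pos: "t \<in> {1..2*k} \<Longrightarrow> 1 \<le> i t" for t
    using monotone_index_ge_first[OF mono, of t] \<open>1 \<le> i 1\<close> by auto
  have meas_i: "a (i t) \<in> borel_measurable M"
    and vals_i: "\<omega> \<in> space M \<Longrightarrow> a (i t) \<omega> \<in> S" if "1 \<le> t" "t \<le> 2*k" for t \<omega>
    using pos[of t] that meas vals by auto
  have blocks: "{1..2*k} = {1..2*l-1} \<union> {2*l..2*k}" "{1..2*l-1} \<inter> {2*l..2*k} = {}"
    using l(1) by auto
  have "\<bar>expectation (\<lambda>\<omega>. \<Prod>t\<in>{1..2*k}. a (i t) \<omega>)\<bar>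
        \<le> C * \<alpha> ^ g l * K ^ (card {1..2*l-1} + card {2*l..2*k})"
    unfolding blocks(1) K_def
  proof (rule expectation_prod_decoupling[OF \<open>finite S\<close> _ _ blocks(2)])
    show "expectation (\<lambda>\<omega>. \<Prod>t\<in>{1..2*l-1}. a (i t) \<omega>) = 0"
      using l(1) pos by (intro odd_moments) auto
    show "\<bar>prob (cylinder M (\<lambda>t. a (i t)) {1..2*l-1} u \<inter> cylinder M (\<lambda>t. a (i t)) {2*l..2*k} w)
          - prob (cylinder M (\<lambda>t. a (i t)) {1..2*l-1} u) * prob (cylinder M (\<lambda>t. a (i t)) {2*l..2*k} w)\<bar>
          \<le> C * \<alpha> ^ g l" if "u \<in> PiE {1..2*l-1} (\<lambda>_. S)" "w \<in> PiE {2*l..2*k} (\<lambda>_. S)" for u w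
      using mixing_cylinder_covariance[OF assms(1,8,5,6), of "2*l" "2*k" i u w] that l(1)
        \<open>1 \<le> i 1\<close> mono meas_i by (auto simp: g_def)
  qed (use l(1) in \<open>auto intro: meas_i vals_i\<close>)
  moreover have "card {1..2*l-1} + card {2*l..2*k} = 2*k" using l(1) by auto
  ultimately show "\<bar>expectation (\<lambda>\<omega>. \<Prod>t\<in>{1..2*k}. a (i t) \<omega>)\<bar> \<le> C * K ^ (2*k) * \<alpha> ^ Max (g ` {1..k})"
    using l(2) by (simp add: mult_ac)
  have "\<alpha> ^ Max (g ` {1..k}) \<le> (\<Prod>l\<in>{1..k}. (\<alpha> powr (1 / real k)) ^ g l)"
    using power_Max_le_prod_root_powers[of \<alpha> "{1..k}" g] \<open>1 \<le> k\<close> assms(6,7) by simp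
  moreover have "0 \<le> C * K ^ (2*k)" using \<open>0 \<le> C\<close> by (simp add: K_def sum_nonneg)
  ultimately show "C * K ^ (2*k) * \<alpha> ^ Max (g ` {1..k})
           \<le> C * K ^ (2*k) * (\<Prod>l\<in>{1..k}. (\<alpha> powr (1 / real k)) ^ g l)"
    by (rule mult_left_mono)
qed

theorem mainTheorem6:
  fixes M :: "'a measure" and a :: "nat \<Rightarrow> 'a \<Rightarrow> real" and S :: "real set"
    and C \<alpha> :: real
  assumes "prob_space M"
    and "\<And>n. 1 \<le> n \<Longrightarrow> a n \<in> borel_measurable M"
    and "finite S" and "card S \<ge> 2"
    and "\<And>n \<omega>. 1 \<le> n \<Longrightarrow> \<omega> \<in> space M \<Longrightarrow> a n \<omega> \<in> S"
    and "stationary_proc M a"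
    and "integral\<^sup>L M (a 1) = 0"
    and "C > 0" and "0 \<le> \<alpha>" and "\<alpha> < 1"
    and "mixing_cond M a S C \<alpha>"
    and "\<And>(r::nat) (i::nat \<Rightarrow> nat). odd r \<Longrightarrow> (\<forall>t\<in>{1..r}. 1 \<le> i t) \<Longrightarrow>
           integral\<^sup>L M (\<lambda>\<omega>. \<Prod>t\<in>{1..r}. a (i t) \<omega>) = 0"
  shows "\<forall>k::nat. 1 \<le> k \<longrightarrow> (\<exists>Ck::real. \<forall>i::nat \<Rightarrow> nat.
           1 \<le> i 1 \<longrightarrow> (\<forall>t. 1 \<le> t \<longrightarrow> t < 2 * k \<longrightarrow> i t \<le> i (t + 1)) \<longrightarrow>
           \<bar>integral\<^sup>L M (\<lambda>\<omega>. \<Prod>t\<in>{1..2*k}. a (i t) \<omega>)\<bar>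
              \<le> Ck * \<alpha> ^ Max ((\<lambda>l. i (2*l) - i (2*l - 1)) ` {1..k})
           \<and> Ck * \<alpha> ^ Max ((\<lambda>l. i (2*l) - i (2*l - 1)) ` {1..k})
              \<le> Ck * (\<Prod>l\<in>{1..k}. (\<alpha> powr (1 / real k)) ^ (i (2*l) - i (2*l - 1))))"
proof -
  have "0 \<le> C" "\<alpha> \<le> 1" using assms(8,10) by auto
  show ?thesis
    using even_moment_bound[OF assms(1,2,3,5) \<open>0 \<le> C\<close> assms(9) \<open>\<alpha> \<le> 1\<close> assms(11,12)]
    by blast
qed

end
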